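(* Let $n \ge r \ge 1$, let $\bm U^\star \in \mathbb{R}^{n\times r}$ have rows $\bm u_1^\star,\dots,\bm u_n^\star \in \mathbb{R}^r$ (written as column vectors), and let $\bm M = \bm M^\star := \bm U^\star \bm U^{\star T}$ (noiseless case). Let $\Omega = \{(i,j)\in[n]\times[n] : m_{ij} \ge 0\}$ (ReLU sampling), and let $$F(\bm U) = \tfrac14 \left\| (\bm U\bm U^T - \bm M)_\Omega\right\|_F^2, \qquad \bm U \in \mathbb{R}^{n\times r}.$$ Let $\mathcal{C}_1,\dots,\mathcal{C}_{2^r}$ be the $2^r$ orthants of $\mathbb{R}^r$, ordered so that for each $i\in[2^r-1]$ the sign patterns of $\mathcal{C}_i$ and $\mathcal{C}_{i+1}$ differ in exactly one coordinate. Suppose $[n]$ is partitioned into index sets $J_1,\dots,J_{2^r}$ such that $\bm u_k^\star \in \mathcal{C}_i$ for every $k\in J_i$, and let $\bm U_i^\star \in \mathbb{R}^{|J_i|\times r}$ be the submatrix of $\bm U^\star$ formed by the rows indexed by $J_i$. Assume: (1) $\mathrm{rank}(\bm U_i^\star) = r$ for every $i\in[2^r]$; (2) for every $i \in [2^r-1]$, letting $\Omega_{i+1,i} = \{(k,l)\in J_{i+1}\times J_i : \bm u_k^{\star T}\bm u_l^\star \ge 0\}$, we have $|\Omega_{i+1,i}| \ge r^2$ and the linear span of $\{\bm u_k^\star \bm u_l^{\star T} : (k,l)\in \Omega_{i+1,i}\}$ equals $\mathbb{R}^{r\times r}$. Then $\bm U\in\mathbb{R}^{n\times r}$ is a global minimizer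 of $F$ over $\mathbb{R}^{n\times r}$ if and only if $\bm U\bm U^T = \bm M^\star$.
   Context: For a matrix $\bm A\in\mathbb{R}^{n\times n}$ and $\Omega\subseteq[n]\times[n]$, $(\bm A)_\Omega$ denotes the matrix that agrees with $\bm A$ on entries in $\Omega$ and is zero elsewhere. $[n]=\{1,\dots,n\}$. $m_{ij}$ denotes the $(i,j)$ entry of $\bm M$. *)

theory Defs
  imports "HOL-Analysis.Analysis"
begin

text \<open>The Frobenius norm of a matrix A :: real^'b^'a is the library norm (Euclidean norm
  of the vector of rows, i.e. sqrt of the sum of squares of all entries).\<close>

definition proj_Omega :: "('a \<times> 'b) set \<Rightarrow> real^'b^'a \<Rightarrow> real^'b^'a" where
  "proj_Omega \<Omega> A = (\<chi> i j. if (i, j) \<in> \<Omega> then A $ i $ j else 0)"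

definition relu_Omega :: "real^'n^'n \<Rightarrow> ('n \<times> 'n) set" where
  "relu_Omega M = {(i, j). M $ i $ j \<ge> 0}"

definition lossF :: "real^'n^'n \<Rightarrow> real^'r^'n \<Rightarrow> real" where
  "lossF M U = (1/4) * (norm (proj_Omega (relu_Omega M) (U ** transpose U - M)))\<^sup>2"

definition rank_rows :: "real^'r^'n \<Rightarrow> 'n set \<Rightarrow> nat" where
  "rank_rows U J = dim {row k U | k. k \<in> J}"

definition orthant :: "('r \<Rightarrow> bool) \<Rightarrow> (real^'r) set" where
  "orthant s = {x. \<forall>k. if s k then x $ k \<ge> 0 else x $ k \<le> 0}"

definition outer :: "real^'r \<Rightarrow> real^'r \<Rightarrow> real^'r^'r" where
  "outer u v = (\<chi> a b. u $ a * v $ b)"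

end

theory Submission
  imports Defs
begin

text \<open>As F is nonnegative and vanishes at U*, the minimizers are exactly the U whose rows
  satisfy u_k \<bullet> u_l = u*_k \<bullet> u*_l whenever the right-hand side is nonnegative. The rows of
  one block lie in one orthant, so there the whole Gram matrix is matched; since the block
  spans R^r, an orthogonal A_i maps u*_k to u_k on block i. On adjacent blocks the matched
  cross inner products say that A_(i+1)^T A_i - I is orthogonal to the spanning outer
  products u*_k u*_l^T, so A_(i+1) = A_i. Thus one orthogonal matrix maps all rows of U* to
  those of U, and U U^T = U* U*^T.\<close>

lemma inner_matrix_vector_mult_left: "((A::real^'m^'n) *v x) \<bullet> y = x \<bullet> (transpose A *v y)"
  by (metis dot_lmul_matrix inner_commute transpose_matrix_vector)

lemma outer_mult_vector: "outer a b *v v = (b \<bullet> v) *\<^sub>R a"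
  by (simp add: outer_def vec_eq_iff matrix_vector_mult_def inner_vec_def sum_distrib_left mult_ac)

lemma inner_outer: "outer a b \<bullet> C = a \<bullet> (C *v b)"
  by (simp add: outer_def inner_vec_def matrix_vector_mult_def sum_distrib_left mult_ac)

lemma sum_outer_mult_vector:
  "(\<Sum>k\<in>J. outer (y k) (x k)) *v v = (\<Sum>k\<in>J. (x k \<bullet> v) *\<^sub>R y k)"
  by (induction J rule: infinite_finite_induct)
    (simp_all add: matrix_vector_mult_add_rdistrib outer_mult_vector)

lemma eq_0_if_orthogonal_to_spanning:
  assumes "span S = UNIV" and "\<forall>a\<in>S. a \<bullet> v = 0"
  shows "v = 0"
proof -
  have "orthogonal v v"
    by (rule orthogonal_to_span) (use assms in \<open>auto simp: orthogonal_def inner_commute\<close>)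
  then show ?thesis by (simp add: orthogonal_def)
qed

lemma matrix_eq_0_if_bilinear_form_vanishes:
  fixes C :: "real^'n^'n"
  assumes spans: "span S = UNIV" and vanishes: "\<forall>a\<in>S. \<forall>b\<in>S. a \<bullet> (C *v b) = 0"
  shows "C = 0"
proof -
  have transpose_vanishes: "transpose C *v a = 0" if "a \<in> S" for a
  proof (rule eq_0_if_orthogonal_to_spanning [OF spans], intro ballI)
    fix b assume "b \<in> S"
    have "b \<bullet> (transpose C *v a) = (C *v b) \<bullet> a"
      by (simp add: inner_matrix_vector_mult_left)
    also have "\<dots> = 0"
      using vanishes \<open>a \<in> S\<close> \<open>b \<in> S\<close> by (simp add: inner_commute)
    finally show "b \<bullet> (transpose C *v a) = 0" .
  qed
  have "C *v v = 0" for v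
  proof (intro eq_0_if_orthogonal_to_spanning [OF spans] ballI)
    fix a assume "a \<in> S"
    have "a \<bullet> (C *v v) = (transpose C *v a) \<bullet> v"
      by (simp add: dot_lmul_matrix)
    then show "a \<bullet> (C *v v) = 0"
      using transpose_vanishes \<open>a \<in> S\<close> by simp
  qed
  then show ?thesis
    by (metis matrix_eq matrix_vector_mult_0)
qed

lemma sum_scaleR_transfer_if_Gram_eq:
  fixes x :: "'a \<Rightarrow> 'v::real_inner" and y :: "'a \<Rightarrow> 'w::real_inner"
  assumes "finite J" and Gram: "\<forall>k\<in>J. \<forall>m\<in>J. y k \<bullet> y m = x k \<bullet> x m" and "l \<in> J"
    and relation: "(\<Sum>k\<in>J. c k *\<^sub>R x k) = x l"
  shows "(\<Sum>k\<in>J. c k *\<^sub>R y k) = y l"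
proof -
  define d where "d = (\<Sum>k\<in>J. c k *\<^sub>R y k) - y l"
  have d_orth: "d \<bullet> y m = 0" if "m \<in> J" for m
  proof -
    have "d \<bullet> y m = (\<Sum>k\<in>J. c k * (y k \<bullet> y m)) - y l \<bullet> y m"
      by (simp add: d_def inner_diff_left inner_sum_left)
    also have "\<dots> = (\<Sum>k\<in>J. c k * (x k \<bullet> x m)) - x l \<bullet> x m"
      using Gram \<open>l \<in> J\<close> that by simp
    also have "\<dots> = ((\<Sum>k\<in>J. c k *\<^sub>R x k) - x l) \<bullet> x m"
      by (simp add: inner_diff_left inner_sum_left)
    finally show ?thesis
      by (simp add: relation)
  qed
  have "d \<bullet> d = (\<Sum>k\<in>J. c k * (d \<bullet> y k)) - d \<bullet> y l"
    by (simp add: d_def inner_diff_right inner_sum_right)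
  then have "d \<bullet> d = 0"
    using d_orth \<open>l \<in> J\<close> by simp
  then show ?thesis
    by (simp add: d_def)
qed

lemma orthogonal_matrix_exists_if_Gram_eq:
  fixes x y :: "'a \<Rightarrow> real^'n"
  assumes "finite J" and spans: "span (x ` J) = UNIV"
    and Gram: "\<forall>k\<in>J. \<forall>m\<in>J. y k \<bullet> y m = x k \<bullet> x m"
  obtains A where "orthogonal_matrix A" and "\<forall>k\<in>J. A *v x k = y k"
proof -
  define G where "G = (\<Sum>k\<in>J. outer (x k) (x k))"
  define B where "B = (\<Sum>k\<in>J. outer (y k) (x k))"
  have "v = 0" if "G *v v = 0" for v
  proof -
    have "(\<Sum>k\<in>J. (x k \<bullet> v)\<^sup>2) = v \<bullet> (G *v v)"
      by (simp add: G_def sum_outer_mult_vector inner_sum_right power2_eq_square inner_commute)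
    then have "\<forall>k\<in>J. x k \<bullet> v = 0"
      using that \<open>finite J\<close> by (simp add: sum_nonneg_eq_0_iff)
    then show ?thesis
      using eq_0_if_orthogonal_to_spanning [OF spans] by blast
  qed
  then obtain H where "H ** G = mat 1"
    using matrix_left_invertible_ker by blast
  then have GH: "G ** H = mat 1"
    by (simp add: matrix_left_right_inverse)
  \<comment> \<open>A x_l = y_l because the relation G (H x_l) = x_l among the x_k carries over to the y_k.\<close>
  define A where "A = B ** H"
  have A_maps: "A *v x l = y l" if "l \<in> J" for l
  proof -
    have "(\<Sum>k\<in>J. (x k \<bullet> (H *v x l)) *\<^sub>R x k) = G *v (H *v x l)"
      by (simp add: G_def sum_outer_mult_vector)
    also have "\<dots> = x l"
      by (simp add: GH matrix_vector_mul_assoc)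
    finally have "(\<Sum>k\<in>J. (x k \<bullet> (H *v x l)) *\<^sub>R x k) = x l" .
    then have "(\<Sum>k\<in>J. (x k \<bullet> (H *v x l)) *\<^sub>R y k) = y l"
      by (rule sum_scaleR_transfer_if_Gram_eq [OF \<open>finite J\<close> Gram that])
    then show ?thesis
      by (simp add: A_def B_def sum_outer_mult_vector flip: matrix_vector_mul_assoc)
  qed
  have "transpose A ** A - mat 1 = 0"
  proof (rule matrix_eq_0_if_bilinear_form_vanishes [OF spans], safe)
    fix k l assume "k \<in> J" "l \<in> J"
    have "x k \<bullet> ((transpose A ** A - mat 1) *v x l) = (A *v x k) \<bullet> (A *v x l) - x k \<bullet> x l"
      by (simp add: matrix_vector_mult_diff_rdistrib inner_diff_right inner_matrix_vector_mult_left
          flip: matrix_vector_mul_assoc)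
    then show "x k \<bullet> ((transpose A ** A - mat 1) *v x l) = 0"
      using A_maps Gram \<open>k \<in> J\<close> \<open>l \<in> J\<close> by simp
  qed
  then show ?thesis
    using that A_maps by (simp add: orthogonal_matrix)
qed

lemma orthogonal_matrix_eq_if_cross_Gram_eq:
  fixes x z :: "'a \<Rightarrow> real^'n" and A B :: "real^'n^'n"
  assumes "orthogonal_matrix B"
    and spans: "span {outer (x k) (z l) | k l. P k l} = UNIV"
    and cross: "\<forall>k l. P k l \<longrightarrow> (B *v x k) \<bullet> (A *v z l) = x k \<bullet> z l"
  shows "A = B"
proof -
  define C where "C = transpose B ** A - mat 1"
  have "C = 0"
  proof (rule eq_0_if_orthogonal_to_spanning [OF spans], safe)
    fix k l assume "P k l"
    have "outer (x k) (z l) \<bullet> C = (B *v x k) \<bullet> (A *v z l) - x k \<bullet> z l"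
      by (simp add: C_def inner_outer matrix_vector_mult_diff_rdistrib inner_diff_right
          inner_matrix_vector_mult_left flip: matrix_vector_mul_assoc)
    then show "outer (x k) (z l) \<bullet> C = 0"
      using cross \<open>P k l\<close> by simp
  qed
  then have "transpose B ** A = mat 1"
    by (simp add: C_def)
  then have "B ** (transpose B ** A) = B"
    by simp
  with \<open>orthogonal_matrix B\<close> show ?thesis
    by (simp add: matrix_mul_assoc orthogonal_matrix_def)
qed

lemma Gram_eq_if_Gram_eq_on_nonneg_entries:
  fixes x y :: "'a::finite \<Rightarrow> real^'n" and J :: "nat \<Rightarrow> 'a set"
  assumes cover: "(\<Union>i<N. J i) = UNIV"
    and block_nonneg: "\<forall>i<N. \<forall>k\<in>J i. \<forall>l\<in>J i. x k \<bullet> x l \<ge> 0"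
    and block_spans: "\<forall>i<N. span (x ` J i) = UNIV"
    and adjacent_spans: "\<forall>i. i + 1 < N \<longrightarrow>
        span {outer (x k) (x l) | k l. k \<in> J (i + 1) \<and> l \<in> J i \<and> x k \<bullet> x l \<ge> 0} = UNIV"
    and nonneg_eq: "\<forall>k l. x k \<bullet> x l \<ge> 0 \<longrightarrow> y k \<bullet> y l = x k \<bullet> x l"
  shows "y k \<bullet> y l = x k \<bullet> x l"
proof -
  have "\<exists>A. orthogonal_matrix A \<and> (\<forall>k\<in>J i. A *v x k = y k)" if "i < N" for i
  proof (rule orthogonal_matrix_exists_if_Gram_eq)
    show "span (x ` J i) = UNIV"
      using block_spans that by blast
    show "\<forall>k\<in>J i. \<forall>m\<in>J i. y k \<bullet> y m = x k \<bullet> x m"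
      using block_nonneg nonneg_eq that by blast
  qed auto
  then obtain A where A: "\<And>i. i < N \<Longrightarrow> orthogonal_matrix (A i) \<and> (\<forall>k\<in>J i. A i *v x k = y k)"
    by metis
  have A_step: "A i = A (i + 1)" if "i + 1 < N" for i
  proof (rule orthogonal_matrix_eq_if_cross_Gram_eq)
    show "orthogonal_matrix (A (i + 1))"
      using A that by blast
    show "span {outer (x k) (x l) | k l. k \<in> J (i + 1) \<and> l \<in> J i \<and> x k \<bullet> x l \<ge> 0} = UNIV"
      using adjacent_spans that by blast
    show "\<forall>k l. k \<in> J (i + 1) \<and> l \<in> J i \<and> x k \<bullet> x l \<ge> 0 \<longrightarrow>
        (A (i + 1) *v x k) \<bullet> (A i *v x l) = x k \<bullet> x l"
      using A [of i] A [of "i + 1"] nonneg_eq that by simp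
  qed
  have A_const: "A i = A 0" if "i < N" for i
    using that
  proof (induction i)
    case (Suc i)
    then show ?case
      using A_step [of i] by simp
  qed simp
  obtain i j where "i < N" "j < N" "k \<in> J i" "l \<in> J j"
    using cover by blast
  then have "y k \<bullet> y l = (A 0 *v x k) \<bullet> (A 0 *v x l)"
    using A A_const by metis
  also have "\<dots> = x k \<bullet> ((transpose (A 0) ** A 0) *v x l)"
    by (simp add: inner_matrix_vector_mult_left flip: matrix_vector_mul_assoc)
  also have "\<dots> = x k \<bullet> x l"
    using A \<open>i < N\<close> by (auto simp: orthogonal_matrix)
  finally show ?thesis .
qed

lemma inner_nonneg_if_same_orthant:
  assumes "a \<in> orthant s" and "b \<in> orthant s"
  shows "a \<bullet> b \<ge> 0"
proof -
  have "a $ c * b $ c \<ge> 0" for c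
    using assms unfolding orthant_def
    by (cases "s c") (auto intro: mult_nonneg_nonneg mult_nonpos_nonpos)
  then show ?thesis
    by (simp add: inner_vec_def sum_nonneg)
qed

lemma span_rows_eq_UNIV_if_rank_rows:
  fixes U :: "real^'r^'n"
  assumes "rank_rows U J = CARD('r)"
  shows "span ((\<lambda>k. U $ k) ` J) = UNIV"
proof -
  have "{row k U | k. k \<in> J} = (\<lambda>k. U $ k) ` J"
    by (auto simp: row_def)
  then show ?thesis
    using assms dim_eq_full [of "(\<lambda>k. U $ k) ` J"] by (simp add: rank_rows_def)
qed

lemma matrix_mult_transpose_component:
  fixes A :: "real^'r^'n"
  shows "(A ** transpose A) $ i $ j = A $ i \<bullet> A $ j"
  by (simp add: matrix_mult_transpose_dot_row row_def)

lemma lossF_nonneg: "lossF M V \<ge> 0"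
  by (simp add: lossF_def)

lemma lossF_eq_0_iff:
  "lossF M V = 0 \<longleftrightarrow> (\<forall>i j. M $ i $ j \<ge> 0 \<longrightarrow> V $ i \<bullet> V $ j = M $ i $ j)"
  by (auto simp: lossF_def proj_Omega_def relu_Omega_def vec_eq_iff matrix_mult_transpose_component)

theorem theorem3p3:
  fixes Ustar :: "real^'r^'n"
    and s :: "nat \<Rightarrow> 'r \<Rightarrow> bool"
    and J :: "nat \<Rightarrow> 'n set"
    and U :: "real^'r^'n"
  defines "M \<equiv> Ustar ** transpose Ustar"
  assumes n_ge_r: "CARD('n) \<ge> CARD('r)"
    and orth_enum: "bij_betw s {..<2 ^ CARD('r)} UNIV"
    and orth_adj: "\<forall>i. i + 1 < 2 ^ CARD('r) \<longrightarrow> card {k. s i k \<noteq> s (i + 1) k} = 1"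
    and J_cover: "(\<Union>i<2 ^ CARD('r). J i) = UNIV"
    and J_disj: "\<forall>i<2 ^ CARD('r). \<forall>j<2 ^ CARD('r). i \<noteq> j \<longrightarrow> J i \<inter> J j = {}"
    and J_orth: "\<forall>i<2 ^ CARD('r). \<forall>k\<in>J i. Ustar $ k \<in> orthant (s i)"
    and rank_cond: "\<forall>i<2 ^ CARD('r). rank_rows Ustar (J i) = CARD('r)"
    and card_cond: "\<forall>i. i + 1 < 2 ^ CARD('r) \<longrightarrow>
        card {(k, l). k \<in> J (i + 1) \<and> l \<in> J i \<and> Ustar $ k \<bullet> Ustar $ l \<ge> 0} \<ge> CARD('r) ^ 2"
    and span_cond: "\<forall>i. i + 1 < 2 ^ CARD('r) \<longrightarrow>
        span {outer (Ustar $ k) (Ustar $ l) | k l. k \<in> J (i + 1) \<and> l \<in> J i \<and> Ustar $ k \<bullet> Ustar $ l \<ge> 0} = UNIV"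
  shows "(\<forall>V :: real^'r^'n. lossF M U \<le> lossF M V) \<longleftrightarrow> U ** transpose U = M"
proof
  assume minimizer: "\<forall>V :: real^'r^'n. lossF M U \<le> lossF M V"
  have "lossF M Ustar = 0"
    by (simp add: lossF_eq_0_iff M_def matrix_mult_transpose_component)
  then have "lossF M U = 0"
    using minimizer lossF_nonneg [of M U] by (metis order_antisym)
  then have observed: "\<forall>k l. Ustar $ k \<bullet> Ustar $ l \<ge> 0 \<longrightarrow> U $ k \<bullet> U $ l = Ustar $ k \<bullet> Ustar $ l"
    by (simp add: lossF_eq_0_iff M_def matrix_mult_transpose_component)
  have "U $ k \<bullet> U $ l = Ustar $ k \<bullet> Ustar $ l" for k l
  proof (rule Gram_eq_if_Gram_eq_on_nonneg_entries [OF J_cover _ _ span_cond observed])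
    show "\<forall>i<2 ^ CARD('r). \<forall>k\<in>J i. \<forall>l\<in>J i. Ustar $ k \<bullet> Ustar $ l \<ge> 0"
      using J_orth inner_nonneg_if_same_orthant by blast
    show "\<forall>i<2 ^ CARD('r). span ((\<lambda>k. Ustar $ k) ` J i) = UNIV"
      using rank_cond span_rows_eq_UNIV_if_rank_rows by blast
  qed
  then show "U ** transpose U = M"
    by (simp add: M_def vec_eq_iff matrix_mult_transpose_component)
next
  assume "U ** transpose U = M"
  then have "lossF M U = 0"
    by (simp add: lossF_eq_0_iff flip: matrix_mult_transpose_component)
  then show "\<forall>V :: real^'r^'n. lossF M U \<le> lossF M V"
    by (simp add: lossF_nonneg)
qed

end
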